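(* Let $X$ and $Y$ be mm-spaces. Then \[ d_{\mathrm{Eur}}(X,Y)=\min_{\pi\in\Pi(m_X,m_Y)}\ \min_{\varepsilon\ge0}\max\{\varepsilon,\ (\pi\otimes\pi)(|d_X-d_Y|>\varepsilon)\}; \] in particular both minima are attained.
   Context: An mm-space is a complete separable metric space $(X,d_X)$ with a Borel probability measure $m_X$. $\Pi(m_X,m_Y)$: Borel probability measures on $X\times Y$ with marginals $m_X,m_Y$. $\pi\otimes\pi$ is the product measure on $X\times Y\times X\times Y$, and $\{|d_X-d_Y|>\varepsilon\}:=\{(x_1,y_1,x_2,y_2):|d_X(x_1,x_2)-d_Y(y_1,y_2)|>\varepsilon\}$. The Eurandom distance is $d_{\mathrm{Eur}}(X,Y):=\inf_{\pi\in\Pi(m_X,m_Y)}\inf_{\varepsilon\ge0}\max\{\varepsilon,(\pi\otimes\pi)(|d_X-d_Y|>\varepsilon)\}$. *)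

theory Defs
  imports "HOL-Probability.Probability"
begin

definition mm_space :: "('a::polish_space) measure \<Rightarrow> bool" where
  "mm_space M \<longleftrightarrow> prob_space M \<and> sets M = sets (borel :: 'a measure)"

definition couplings ::
  "('a::polish_space) measure \<Rightarrow> ('b::polish_space) measure \<Rightarrow> ('a \<times> 'b) measure set" where
  "couplings mX mY = {\<pi>. prob_space \<pi> \<and> sets \<pi> = sets (borel :: ('a \<times> 'b) measure)
      \<and> distr \<pi> mX fst = mX \<and> distr \<pi> mY snd = mY}"

definition distortion_gt :: "real \<Rightarrow> (('a::metric_space \<times> 'b::metric_space) \<times> ('a \<times> 'b)) set" where
  "distortion_gt \<epsilon> = {((x1, y1), (x2, y2)). \<bar>dist x1 x2 - dist y1 y2\<bar> > \<epsilon>}"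

definition eur_cost :: "(('a::metric_space) \<times> ('b::metric_space)) measure \<Rightarrow> real \<Rightarrow> real" where
  "eur_cost \<pi> \<epsilon> = max \<epsilon> (measure (\<pi> \<Otimes>\<^sub>M \<pi>) (distortion_gt \<epsilon>))"

definition d_Eur :: "('a::polish_space) measure \<Rightarrow> ('b::polish_space) measure \<Rightarrow> real" where
  "d_Eur mX mY = (INF \<pi> \<in> couplings mX mY. INF \<epsilon> \<in> {0..}. eur_cost \<pi> \<epsilon>)"

end

theory Submission
  imports Defs "HOL-Library.Diagonal_Subsequence"
begin

text \<open>
  For a fixed coupling the cost \<open>max \<epsilon> (\<pi>\<otimes>\<pi>(|d_X - d_Y| > \<epsilon>))\<close> is the maximum of the identity
  and an antitone, right-continuous function of \<open>\<epsilon>\<close>, so its infimum over \<open>\<epsilon> \<ge> 0\<close> is attained.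

  For the outer minimum take couplings \<open>\<pi>\<^sub>n\<close> and \<open>\<epsilon>\<^sub>n\<close> whose cost tends to \<open>d_Eur X Y\<close>. The couplings
  of two Borel probability measures on Polish spaces are uniformly tight, so by Prokhorov's
  theorem a subsequence converges weakly to some \<open>\<pi>\<close>, which is again a coupling, and along a
  further subsequence \<open>\<epsilon>\<^sub>n \<rightarrow> \<epsilon>\<close>. Weak convergence of \<open>\<pi>\<^sub>n\<close> implies that of \<open>\<pi>\<^sub>n \<otimes> \<pi>\<^sub>n\<close>, and the
  distortion sets \<open>{|d_X - d_Y| > \<epsilon>}\<close> are open, so lower semicontinuity of the measure of open
  sets gives \<open>cost \<pi> \<epsilon> \<le> d_Eur X Y\<close>.
\<close>

section \<open>Prokhorov's theorem\<close>

text \<open>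
  For probability measures this is the portmanteau characterisation of weak convergence.
\<close>

definition open_set_weak_limit :: "(nat \<Rightarrow> 'a::topological_space measure) \<Rightarrow> 'a measure \<Rightarrow> bool"
  where "open_set_weak_limit Q Q0 \<longleftrightarrow>
    (\<forall>G. open G \<longrightarrow> emeasure Q0 G \<le> liminf (\<lambda>n. emeasure (Q n) G))"

lemma open_set_weak_limitD:
  "open_set_weak_limit Q Q0 \<Longrightarrow> open G \<Longrightarrow> emeasure Q0 G \<le> liminf (\<lambda>n. emeasure (Q n) G)"
  unfolding open_set_weak_limit_def by blast

lemma open_set_weak_limit_subseq:
  assumes "open_set_weak_limit Q Q0" and "strict_mono s"
  shows "open_set_weak_limit (Q \<circ> s) Q0"
  unfolding open_set_weak_limit_def
proof (intro allI impI)
  fix G :: "'a set" assume "open G"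
  have "emeasure Q0 G \<le> liminf (\<lambda>n. emeasure (Q n) G)"
    using assms(1) \<open>open G\<close> by (rule open_set_weak_limitD)
  also have "\<dots> \<le> liminf ((\<lambda>n. emeasure (Q n) G) \<circ> s)"
    using assms(2) by (rule liminf_subseq_mono)
  finally show "emeasure Q0 G \<le> liminf (\<lambda>n. emeasure ((Q \<circ> s) n) G)"
    by (simp add: o_def)
qed

lemma diagonal_subseq_convergent:
  fixes g :: "nat \<Rightarrow> nat \<Rightarrow> 'a::heine_borel"
  assumes "\<And>i. bounded (range (g i))"
  obtains d where "strict_mono d" "\<And>i. convergent (\<lambda>k. g i (d k))"
proof -
  interpret subseqs "\<lambda>i s. convergent (\<lambda>k. g i (s k))"
  proof
    fix i and s :: "nat \<Rightarrow> nat"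
    have "bounded (range (\<lambda>k. g i (s k)))"
      using assms by (rule bounded_subset) auto
    then obtain l s' where "strict_mono s'" "((\<lambda>k. g i (s k)) \<circ> s') \<longlonglongrightarrow> l"
      using bounded_imp_convergent_subsequence by blast
    then show "\<exists>s'. strict_mono s' \<and> convergent (\<lambda>k. g i ((s \<circ> s') k))"
      by (auto simp: convergent_def o_def)
  qed
  have "convergent (\<lambda>k. g i ((diagseq \<circ> (+) (Suc i)) k))" for i
  proof (rule diagseq_holds)
    fix r s :: "nat \<Rightarrow> nat" and n
    assume "strict_mono r" "convergent (\<lambda>k. g n (s k))"
    then show "convergent (\<lambda>k. g n ((s \<circ> r) k))"
      using convergent_subseq_convergent[of "\<lambda>k. g n (s k)" r] by (simp add: o_def)
  qed
  then have "convergent (\<lambda>k. g i (diagseq k))" for i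
    by (subst convergent_ignore_initial_segment[symmetric, of _ "Suc i"], subst add.commute)
      (simp add: o_def)
  then show ?thesis
    using subseq_diagseq that by blast
qed

lemma closed_cover_of_open_cover:
  fixes H :: "'a::metric_space set"
  assumes "closed H" "open G1" "open G2" "H \<subseteq> G1 \<union> G2"
  obtains F1 F2 where "closed F1" "closed F2" "F1 \<subseteq> G1" "F2 \<subseteq> G2" "F1 \<union> F2 = H"
proof (cases "G1 = UNIV \<or> G2 = UNIV")
  case True
  then show ?thesis
  proof
    assume "G1 = UNIV"
    then show ?thesis using that[of H "{}"] assms(1) by simp
  next
    assume "G2 = UNIV"
    then show ?thesis using that[of "{}" H] assms(1) by simp
  qed
next
  case False
  then have ne: "- G1 \<noteq> {}" "- G2 \<noteq> {}" by auto
  define F1 where "F1 = H \<inter> {x. infdist x (- G2) \<le> infdist x (- G1)}"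
  define F2 where "F2 = H \<inter> {x. infdist x (- G1) \<le> infdist x (- G2)}"
  have closed: "closed F1" "closed F2"
    unfolding F1_def F2_def using assms(1)
    by (intro closed_Int closed_Collect_le continuous_on_infdist continuous_on_id; simp)+
  have near: "x \<in> G" if "x \<in> H" "infdist x (- G') \<le> infdist x (- G)" "G \<union> G' = G1 \<union> G2"
    "open G'" "- G' \<noteq> {}" for x G G'
  proof (rule ccontr)
    assume "x \<notin> G"
    then have "infdist x (- G) = 0"
      by (intro infdist_zero) simp
    then have "infdist x (- G') = 0"
      using that(2) infdist_nonneg[of x "- G'"] by linarith
    then have "x \<in> - G'"
      using in_closure_iff_infdist_zero[OF that(5)] that(4) by (simp add: closed_Compl)
    then show False
      using that(1,3) assms(4) \<open>x \<notin> G\<close> by auto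
  qed
  have "F1 \<subseteq> G1"
    unfolding F1_def using near[where G=G1 and G'=G2, OF _ _ refl assms(3) ne(2)] by blast
  moreover have "F2 \<subseteq> G2"
    unfolding F2_def using near[where G=G2 and G'=G1, OF _ _ Un_commute assms(2) ne(1)] by blast
  moreover have "F1 \<union> F2 = H"
    unfolding F1_def F2_def by auto
  ultimately show ?thesis
    by (rule that[OF closed])
qed

text \<open>
  Billingsley's construction (Convergence of Probability Measures, Theorem 5.1): the finite
  unions of the compact sets \<open>closure A \<inter> K i\<close>, with \<open>A\<close> from a countable basis, form a countable
  class on which a diagonal subsequence of \<open>P\<close> converges. The limit content on this class
  induces an inner content on open sets and an outer measure whose Carath\'eodory sets contain
  the closed sets; tightness makes the resulting Borel measure a probability measure.
\<close>

locale tight_sequence =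
  fixes P :: "nat \<Rightarrow> 'a::{metric_space,second_countable_topology} measure"
    and K :: "nat \<Rightarrow> 'a set" and B :: "'a set set"
  assumes prob_space_P: "\<And>n. prob_space (P n)" and sets_P: "\<And>n. sets (P n) = sets borel"
    and compact_K: "\<And>i. compact (K i)" and incseq_K: "incseq K"
    and measure_K: "\<And>i n. measure (P n) (K i) \<ge> 1 - 1 / Suc i"
    and countable_B: "countable B" and basis_B: "topological_basis B"
begin

definition approx_sets :: "'a set set" where
  "approx_sets = Union ` {S. finite S \<and> S \<subseteq> (\<lambda>(A, i). closure A \<inter> K i) ` (B \<times> UNIV)}"

lemma countable_approx_sets: "countable approx_sets"
  unfolding approx_sets_def
  by (intro countable_image countable_Collect_finite_subset countable_SIGMA countable_B) auto

lemma empty_in_approx_sets: "{} \<in> approx_sets"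
  unfolding approx_sets_def by (auto intro!: image_eqI[where x="{}"])

lemma Un_in_approx_sets:
  assumes "H \<in> approx_sets" "H' \<in> approx_sets"
  shows "H \<union> H' \<in> approx_sets"
proof -
  obtain S S' where "finite S" "finite S'" "H = \<Union>S" "H' = \<Union>S'"
    "S \<subseteq> (\<lambda>(A, i). closure A \<inter> K i) ` (B \<times> UNIV)" "S' \<subseteq> (\<lambda>(A, i). closure A \<inter> K i) ` (B \<times> UNIV)"
    using assms unfolding approx_sets_def by auto
  then show ?thesis
    unfolding approx_sets_def by (intro image_eqI[where x="S \<union> S'"]) auto
qed

lemma compact_approx_set: "H \<in> approx_sets \<Longrightarrow> compact H"
  unfolding approx_sets_def using compact_K by (auto intro!: compact_Union closed_Int_compact)

lemma closed_approx_set: "H \<in> approx_sets \<Longrightarrow> closed H"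
  using compact_approx_set compact_imp_closed by blast

lemma finite_measure_P: "finite_measure (P n)"
  by (rule prob_space.finite_measure[OF prob_space_P])

lemma approx_set_in_sets: "H \<in> approx_sets \<Longrightarrow> H \<in> sets (P n)"
  using closed_approx_set sets_P by auto

lemma approx_set_subset_K:
  assumes "H \<in> approx_sets"
  obtains i where "H \<subseteq> K i"
proof -
  obtain S where S: "finite S" "S \<subseteq> (\<lambda>(A, i). closure A \<inter> K i) ` (B \<times> UNIV)" "H = \<Union>S"
    using assms unfolding approx_sets_def by auto
  then have "\<forall>F\<in>S. \<exists>j. F \<subseteq> K j" by auto
  then obtain j where j: "\<And>F. F \<in> S \<Longrightarrow> F \<subseteq> K (j F)" by metis
  obtain N where N: "j ` S \<subseteq> {..<N}"
    using finite_nat_bounded S(1) by blast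
  have "F \<subseteq> K N" if "F \<in> S" for F
  proof -
    have "j F \<le> N" using N that by auto
    then show ?thesis using j[OF that] incseq_K by (auto simp: incseq_def)
  qed
  then show ?thesis
    using S(3) that[of N] by blast
qed

lemma approx_set_between:
  assumes "closed F" "F \<subseteq> K i" "open G" "F \<subseteq> G"
  obtains H where "H \<in> approx_sets" "F \<subseteq> H" "H \<subseteq> G"
proof -
  let ?C = "{A\<in>B. closure A \<subseteq> G}"
  have cover: "F \<subseteq> \<Union>?C"
  proof
    fix x assume "x \<in> F"
    then obtain e where e: "e > 0" "ball x e \<subseteq> G"
      using assms(3,4) openE by blast
    obtain A where A: "A \<in> B" "x \<in> A" "A \<subseteq> ball x (e/2)"
      using topological_basisE[OF basis_B open_ball[of x "e/2"], of x] e by auto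
    have "closure A \<subseteq> cball x (e/2)"
      using A(3) by (intro closure_minimal) auto
    also have "\<dots> \<subseteq> ball x e"
      using e by (auto simp: subset_eq)
    finally show "x \<in> \<Union>?C"
      using A e by auto
  qed
  have "compact F"
    using compact_K[of i] assms(1,2) closed_Int_compact[of F "K i"] by (simp add: Int_absorb2)
  then obtain D where D: "D \<subseteq> ?C" "finite D" "F \<subseteq> \<Union>D"
  proof (rule compactE[OF _ cover])
    show "open A" if "A \<in> ?C" for A
      using that basis_B topological_basis_open by blast
  qed
  let ?H = "\<Union>((\<lambda>A. closure A \<inter> K i) ` D)"
  have "?H \<in> approx_sets"
    unfolding approx_sets_def using D(1,2) by (intro image_eqI[where x="(\<lambda>A. closure A \<inter> K i) ` D"]) auto
  moreover have "F \<subseteq> ?H"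
  proof
    fix x assume "x \<in> F"
    then obtain A where "A \<in> D" "x \<in> A"
      using D(3) by auto
    then show "x \<in> ?H"
      using \<open>x \<in> F\<close> assms(2) closure_subset by blast
  qed
  moreover have "?H \<subseteq> G"
    using D(1) by auto
  ultimately show ?thesis
    using that by blast
qed

end

locale convergent_tight_sequence = tight_sequence +
  assumes convergent_on_approx_sets:
    "\<And>H. H \<in> approx_sets \<Longrightarrow> convergent (\<lambda>n. measure (P n) H)"
begin

definition content :: "'a set \<Rightarrow> real" where
  "content H = lim (\<lambda>n. measure (P n) H)"

definition inner_content :: "'a set \<Rightarrow> ennreal" where
  "inner_content G = (SUP H\<in>{H\<in>approx_sets. H \<subseteq> G}. ennreal (content H))"

definition outer_content :: "'a set \<Rightarrow> ennreal" where
  "outer_content A = (INF G\<in>{G. open G \<and> A \<subseteq> G}. inner_content G)"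

lemma content_LIMSEQ: "H \<in> approx_sets \<Longrightarrow> (\<lambda>n. measure (P n) H) \<longlonglongrightarrow> content H"
  unfolding content_def using convergent_on_approx_sets convergent_LIMSEQ_iff by blast

lemma content_nonneg: "H \<in> approx_sets \<Longrightarrow> 0 \<le> content H"
  by (rule LIMSEQ_le_const[OF content_LIMSEQ]) auto

lemma content_le_1: "H \<in> approx_sets \<Longrightarrow> content H \<le> 1"
  by (rule LIMSEQ_le_const2[OF content_LIMSEQ]) (auto intro!: prob_space.prob_le_1 prob_space_P)

lemma content_mono:
  assumes "H \<in> approx_sets" "H' \<in> approx_sets" "H \<subseteq> H'"
  shows "content H \<le> content H'"
proof (rule LIMSEQ_le[OF content_LIMSEQ content_LIMSEQ])
  show "\<exists>N. \<forall>n\<ge>N. measure (P n) H \<le> measure (P n) H'"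
    using assms approx_set_in_sets
    by (auto intro!: finite_measure.finite_measure_mono[OF finite_measure_P])
qed (use assms in auto)

lemma content_Un_le:
  assumes "H \<in> approx_sets" "H' \<in> approx_sets"
  shows "content (H \<union> H') \<le> content H + content H'"
proof (rule LIMSEQ_le[OF content_LIMSEQ tendsto_add[OF content_LIMSEQ content_LIMSEQ]])
  show "\<exists>N. \<forall>n\<ge>N. measure (P n) (H \<union> H') \<le> measure (P n) H + measure (P n) H'"
    using assms approx_set_in_sets
    by (auto intro!: measure_Un_le)
qed (use assms Un_in_approx_sets in auto)

lemma content_Un_disjoint:
  assumes "H \<in> approx_sets" "H' \<in> approx_sets" "H \<inter> H' = {}"
  shows "content (H \<union> H') = content H + content H'"
proof (rule LIMSEQ_unique[OF content_LIMSEQ])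
  have "measure (P n) (H \<union> H') = measure (P n) H + measure (P n) H'" for n
    using assms approx_set_in_sets by (auto intro!: finite_measure.finite_measure_Union[OF finite_measure_P])
  then show "(\<lambda>n. measure (P n) (H \<union> H')) \<longlonglongrightarrow> content H + content H'"
    using tendsto_add[OF content_LIMSEQ content_LIMSEQ, OF assms(1,2)] by simp
qed (use assms Un_in_approx_sets in auto)

lemma content_empty: "content {} = 0"
  unfolding content_def by simp

lemma content_le_inner_content: "H \<in> approx_sets \<Longrightarrow> H \<subseteq> G \<Longrightarrow> ennreal (content H) \<le> inner_content G"
  unfolding inner_content_def by (rule SUP_upper) auto

lemma inner_content_mono: "G \<subseteq> G' \<Longrightarrow> inner_content G \<le> inner_content G'"
  unfolding inner_content_def by (rule SUP_subset_mono) auto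

lemma inner_content_le_1: "inner_content G \<le> 1"
  unfolding inner_content_def using content_le_1 by (intro SUP_least) auto

lemma inner_content_empty: "inner_content {} = 0"
proof -
  have "{H \<in> approx_sets. H \<subseteq> {}} = {{}}"
    using empty_in_approx_sets by auto
  then show ?thesis
    unfolding inner_content_def by (simp add: content_empty)
qed

lemma inner_content_Un_le:
  assumes "open G1" "open G2"
  shows "inner_content (G1 \<union> G2) \<le> inner_content G1 + inner_content G2"
  unfolding inner_content_def[of "G1 \<union> G2"]
proof (rule SUP_least)
  fix H assume "H \<in> {H \<in> approx_sets. H \<subseteq> G1 \<union> G2}"
  then have H: "H \<in> approx_sets" "H \<subseteq> G1 \<union> G2" by auto
  obtain i where "H \<subseteq> K i"
    using H(1) by (rule approx_set_subset_K)
  obtain F1 F2 where F: "closed F1" "closed F2" "F1 \<subseteq> G1" "F2 \<subseteq> G2" "F1 \<union> F2 = H"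
    using closed_cover_of_open_cover[OF closed_approx_set[OF H(1)] assms H(2)] .
  obtain H1 where H1: "H1 \<in> approx_sets" "F1 \<subseteq> H1" "H1 \<subseteq> G1"
    using approx_set_between[OF F(1) _ assms(1) F(3), of i] F(5) \<open>H \<subseteq> K i\<close> by blast
  obtain H2 where H2: "H2 \<in> approx_sets" "F2 \<subseteq> H2" "H2 \<subseteq> G2"
    using approx_set_between[OF F(2) _ assms(2) F(4), of i] F(5) \<open>H \<subseteq> K i\<close> by blast
  have "content H \<le> content (H1 \<union> H2)"
    using H H1 H2 F(5) by (intro content_mono Un_in_approx_sets) auto
  also have "\<dots> \<le> content H1 + content H2"
    using H1 H2 by (intro content_Un_le) auto
  finally have "ennreal (content H) \<le> ennreal (content H1) + ennreal (content H2)"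
    using H1 H2 content_nonneg by (simp add: ennreal_plus[symmetric] del: ennreal_plus)
  also have "\<dots> \<le> inner_content G1 + inner_content G2"
    using H1 H2 by (intro add_mono content_le_inner_content) auto
  finally show "ennreal (content H) \<le> inner_content G1 + inner_content G2" .
qed

lemma inner_content_finite_UN_le:
  fixes G :: "nat \<Rightarrow> 'a set"
  assumes "\<And>i. open (G i)"
  shows "inner_content (\<Union>i<N. G i) \<le> (\<Sum>i<N. inner_content (G i))"
proof (induction N)
  case 0
  then show ?case by (simp add: inner_content_empty)
next
  case (Suc N)
  have "inner_content (\<Union>i<Suc N. G i) = inner_content ((\<Union>i<N. G i) \<union> G N)"
    by (simp add: lessThan_Suc Un_commute)
  also have "\<dots> \<le> inner_content (\<Union>i<N. G i) + inner_content (G N)"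
    using assms by (intro inner_content_Un_le) auto
  also have "\<dots> \<le> (\<Sum>i<Suc N. inner_content (G i))"
    using Suc by (simp add: add_right_mono)
  finally show ?case .
qed

text \<open>Countable subadditivity needs only finitely many of the \<open>G i\<close>, as each \<open>H\<close> is compact.\<close>

lemma inner_content_UN_le:
  fixes G :: "nat \<Rightarrow> 'a set"
  assumes "\<And>i. open (G i)"
  shows "inner_content (\<Union>i. G i) \<le> (\<Sum>i. inner_content (G i))"
  unfolding inner_content_def[of "\<Union>i. G i"]
proof (rule SUP_least)
  fix H assume "H \<in> {H \<in> approx_sets. H \<subseteq> (\<Union>i. G i)}"
  then have H: "H \<in> approx_sets" "H \<subseteq> (\<Union>i. G i)" by auto
  obtain C where C: "finite C" "H \<subseteq> (\<Union>i\<in>C. G i)"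
    using compactE_image[OF compact_approx_set[OF H(1)], of UNIV G] assms H(2) by auto
  obtain N where "C \<subseteq> {..<N}"
    using finite_nat_bounded[OF C(1)] by auto
  then have "H \<subseteq> (\<Union>i<N. G i)"
    using C by blast
  then have "ennreal (content H) \<le> inner_content (\<Union>i<N. G i)"
    using H by (intro content_le_inner_content)
  also have "\<dots> \<le> (\<Sum>i<N. inner_content (G i))"
    using assms by (rule inner_content_finite_UN_le)
  also have "\<dots> \<le> (\<Sum>i. inner_content (G i))"
    by (intro sum_le_suminf) auto
  finally show "ennreal (content H) \<le> (\<Sum>i. inner_content (G i))" .
qed

lemma outer_content_le_inner_content: "open G \<Longrightarrow> A \<subseteq> G \<Longrightarrow> outer_content A \<le> inner_content G"
  unfolding outer_content_def by (rule INF_lower) auto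

lemma outer_content_open: "open G \<Longrightarrow> outer_content G = inner_content G"
  by (rule antisym[OF outer_content_le_inner_content])
    (auto simp: outer_content_def intro!: INF_greatest inner_content_mono)

lemma outer_content_le_1: "outer_content A \<le> 1"
  using outer_content_le_inner_content[of UNIV A] inner_content_le_1[of UNIV] by auto

lemma outer_content_empty: "outer_content {} = 0"
  using outer_content_open[of "{}"] inner_content_empty by simp

lemma outer_content_mono: "A \<subseteq> A' \<Longrightarrow> outer_content A \<le> outer_content A'"
  unfolding outer_content_def by (rule INF_superset_mono) auto

lemma outer_content_UN_le:
  fixes A :: "nat \<Rightarrow> 'a set"
  shows "outer_content (\<Union>i. A i) \<le> (\<Sum>i. outer_content (A i))"
proof (rule ennreal_le_epsilon)
  fix e :: real assume "0 < e"
  have "\<exists>G. open G \<and> A i \<subseteq> G \<and> inner_content G < outer_content (A i) + ennreal (e * (1/2)^Suc i)" for i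
  proof -
    have "outer_content (A i) \<noteq> \<infinity>"
      using outer_content_le_1[of "A i"] by (auto simp: top_unique)
    then show ?thesis
      using INF_approx_ennreal[of "e * (1/2)^Suc i" "outer_content (A i)" inner_content
          "{G. open G \<and> A i \<subseteq> G}"] \<open>0 < e\<close>
      unfolding outer_content_def by auto
  qed
  then obtain G where G: "\<And>i. open (G i)" "\<And>i. A i \<subseteq> G i"
      "\<And>i. inner_content (G i) < outer_content (A i) + ennreal (e * (1/2)^Suc i)"
    by metis
  have "outer_content (\<Union>i. A i) \<le> inner_content (\<Union>i. G i)"
    using G by (intro outer_content_le_inner_content) auto
  also have "\<dots> \<le> (\<Sum>i. inner_content (G i))"
    using G by (intro inner_content_UN_le)
  also have "\<dots> \<le> (\<Sum>i. outer_content (A i) + ennreal (e * (1/2)^Suc i))"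
    using G by (intro suminf_le) (auto intro: less_imp_le)
  also have "\<dots> = (\<Sum>i. outer_content (A i)) + (\<Sum>i. ennreal (e * (1/2)^Suc i))"
    by (rule suminf_add[symmetric]) auto
  also have "(\<Sum>i. ennreal (e * (1/2)^Suc i)) = ennreal (\<Sum>i. e * (1/2)^Suc i)"
    using \<open>0 < e\<close>
    by (intro suminf_ennreal2 summable_mult sums_summable[OF power_half_series]) auto
  also have "(\<Sum>i. e * (1/2)^Suc i) = e"
    using sums_mult[OF power_half_series, of e] by (simp add: sums_iff)
  finally show "outer_content (\<Union>i. A i) \<le> (\<Sum>i. outer_content (A i)) + ennreal e" .
qed

lemma outer_content_Un_le: "outer_content (A \<union> A') \<le> outer_content A + outer_content A'"
proof -
  define S where "S = (\<lambda>i::nat. if i = 0 then A else if i = 1 then A' else {})"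
  have "outer_content (A \<union> A') = outer_content (\<Union>i. S i)"
    unfolding S_def by (rule arg_cong[where f=outer_content]) (auto split: if_splits)
  also have "\<dots> \<le> (\<Sum>i. outer_content (S i))"
    by (rule outer_content_UN_le)
  also have "\<dots> = (\<Sum>i\<in>{0,1}. outer_content (S i))"
    by (rule suminf_finite) (auto simp: S_def outer_content_empty)
  finally show ?thesis
    by (simp add: S_def)
qed

text \<open>
  The Carath\'eodory inequality for a closed \<open>F\<close> and an open \<open>G\<close>: choose \<open>H\<^sub>3 \<subseteq> G - F\<close> nearly
  exhausting \<open>G - F\<close>, then \<open>H\<^sub>4 \<subseteq> G - H\<^sub>3\<close> nearly exhausting that open set, which contains
  \<open>F \<inter> G\<close>; the disjoint union \<open>H\<^sub>3 \<union> H\<^sub>4\<close> lies in \<open>G\<close>.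
\<close>

lemma outer_content_split_open_le:
  assumes "closed F" "open G"
  shows "outer_content (F \<inter> G) + outer_content ((UNIV - F) \<inter> G) \<le> inner_content G"
proof (rule ennreal_le_epsilon)
  fix e :: real assume "0 < e"
  have approx: "\<exists>H\<in>{H \<in> approx_sets. H \<subseteq> U}. inner_content U < ennreal (content H) + ennreal (e/2)"
    for U
  proof (rule SUP_approx_ennreal)
    show "{H \<in> approx_sets. H \<subseteq> U} \<noteq> {}"
      using empty_in_approx_sets by auto
    show "inner_content U \<noteq> \<infinity>"
      using inner_content_le_1[of U] by (auto simp: top_unique)
  qed (use \<open>0 < e\<close> inner_content_def in auto)
  define G3 where "G3 = G - F"
  obtain H3 where H3: "H3 \<in> approx_sets" "H3 \<subseteq> G3" "inner_content G3 < ennreal (content H3) + ennreal (e/2)"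
    using approx[of G3] by auto
  define G4 where "G4 = G - H3"
  obtain H4 where H4: "H4 \<in> approx_sets" "H4 \<subseteq> G4" "inner_content G4 < ennreal (content H4) + ennreal (e/2)"
    using approx[of G4] by auto
  have "open G3" "open G4"
    unfolding G3_def G4_def using assms H3(1) closed_approx_set by auto
  have "outer_content (F \<inter> G) \<le> inner_content G4"
    using H3(2) \<open>open G4\<close> unfolding G4_def G3_def by (intro outer_content_le_inner_content) auto
  moreover have "outer_content ((UNIV - F) \<inter> G) = inner_content G3"
    using outer_content_open[OF \<open>open G3\<close>] unfolding G3_def by (simp add: Int_commute Diff_eq)
  ultimately have "outer_content (F \<inter> G) + outer_content ((UNIV - F) \<inter> G) \<le> inner_content G4 + inner_content G3"
    by (intro add_mono) auto
  also have "\<dots> \<le> (ennreal (content H4) + ennreal (e/2)) + (ennreal (content H3) + ennreal (e/2))"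
    using H3 H4 by (intro add_mono less_imp_le) auto
  also have "\<dots> = ennreal (content H3 + content H4) + ennreal e"
    using H3 H4 content_nonneg \<open>0 < e\<close>
    by (simp add: ennreal_plus[symmetric] del: ennreal_plus)
  also have "content H3 + content H4 = content (H3 \<union> H4)"
    using H3 H4 unfolding G4_def by (intro content_Un_disjoint[symmetric]) auto
  also have "ennreal (content (H3 \<union> H4)) \<le> inner_content G"
    using H3 H4 unfolding G3_def G4_def by (intro content_le_inner_content Un_in_approx_sets) auto
  finally show "outer_content (F \<inter> G) + outer_content ((UNIV - F) \<inter> G) \<le> inner_content G + ennreal e"
    by (simp add: add_right_mono)
qed

lemma closed_in_lambda_system:
  assumes "closed F"
  shows "F \<in> lambda_system UNIV (Pow UNIV) outer_content"
  unfolding lambda_system_def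
proof (intro CollectI conjI ballI)
  fix A :: "'a set"
  show "outer_content (F \<inter> A) + outer_content ((UNIV - F) \<inter> A) = outer_content A"
  proof (rule antisym)
    have "outer_content (F \<inter> A) + outer_content ((UNIV - F) \<inter> A) \<le> inner_content G"
      if "open G" "A \<subseteq> G" for G
    proof -
      have "outer_content (F \<inter> A) + outer_content ((UNIV - F) \<inter> A)
          \<le> outer_content (F \<inter> G) + outer_content ((UNIV - F) \<inter> G)"
        using that by (intro add_mono outer_content_mono) auto
      also have "\<dots> \<le> inner_content G"
        using assms that(1) by (rule outer_content_split_open_le)
      finally show ?thesis .
    qed
    then show "outer_content (F \<inter> A) + outer_content ((UNIV - F) \<inter> A) \<le> outer_content A"
      unfolding outer_content_def[of A] by (auto intro!: INF_greatest)
    have "A = (F \<inter> A) \<union> ((UNIV - F) \<inter> A)" by auto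
    then show "outer_content A \<le> outer_content (F \<inter> A) + outer_content ((UNIV - F) \<inter> A)"
      using outer_content_Un_le by metis
  qed
qed auto

lemma outer_measure_space_outer_content: "outer_measure_space (Pow UNIV) outer_content"
  unfolding outer_measure_space_def positive_def increasing_def countably_subadditive_def
  using outer_content_empty outer_content_mono outer_content_UN_le by auto

lemma measure_space_outer_content: "measure_space UNIV (sets borel) outer_content"
proof -
  interpret sigma_algebra UNIV "Pow UNIV"
    by (rule sigma_algebra_Pow)
  have lambda: "measure_space UNIV (lambda_system UNIV (Pow UNIV) outer_content) outer_content"
    using caratheodory_lemma[OF outer_measure_space_outer_content] by simp
  then have sa: "sigma_algebra UNIV (lambda_system UNIV (Pow UNIV) outer_content)"
    by (simp add: measure_space_def)
  have "sets borel = sigma_sets UNIV (Collect closed)"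
    by (simp add: borel_eq_closed sets_measure_of)
  also have "\<dots> \<subseteq> lambda_system UNIV (Pow UNIV) outer_content"
    using closed_in_lambda_system by (intro sigma_algebra.sigma_sets_subset[OF sa]) blast
  finally show ?thesis
    using sets.sigma_algebra_axioms[of borel] by (intro measure_down[OF lambda]) simp_all
qed

definition limit_measure :: "'a measure" where
  "limit_measure = measure_of UNIV (sets borel) outer_content"

lemma sets_limit_measure: "sets limit_measure = sets borel"
  unfolding limit_measure_def
  using sigma_algebra.sets_measure_of_eq[OF sets.sigma_algebra_axioms[of borel]] by simp

lemma emeasure_limit_measure: "A \<in> sets borel \<Longrightarrow> emeasure limit_measure A = outer_content A"
  unfolding limit_measure_def using measure_space_outer_content
  by (intro emeasure_measure_of_sigma) (auto simp: measure_space_def)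

lemma inner_content_UNIV: "inner_content UNIV = 1"
proof (rule antisym[OF inner_content_le_1])
  have "ennreal (1 - 1 / Suc i) \<le> inner_content UNIV" for i
  proof -
    obtain H where H: "H \<in> approx_sets" "K i \<subseteq> H"
      using approx_set_between[OF compact_imp_closed[OF compact_K] order_refl open_UNIV subset_UNIV]
      by metis
    have "1 - 1 / Suc i \<le> content H"
    proof (rule LIMSEQ_le_const[OF content_LIMSEQ[OF H(1)]], intro exI allI impI)
      fix n
      have "1 - 1 / Suc i \<le> measure (P n) (K i)"
        by (rule measure_K)
      also have "\<dots> \<le> measure (P n) H"
        using H(2) approx_set_in_sets[OF H(1)]
        by (rule finite_measure.finite_measure_mono[OF finite_measure_P])
      finally show "1 - 1 / Suc i \<le> measure (P n) H" .
    qed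
    then have "ennreal (1 - 1 / Suc i) \<le> ennreal (content H)"
      by (rule ennreal_leI)
    also have "\<dots> \<le> inner_content UNIV"
      using H(1) by (rule content_le_inner_content) simp
    finally show ?thesis .
  qed
  moreover have "(\<lambda>i. ennreal (1 - 1 / Suc i)) \<longlonglongrightarrow> ennreal (1 - 0)"
    using LIMSEQ_inverse_real_of_nat
    by (intro tendsto_ennrealI tendsto_diff tendsto_const) (simp add: inverse_eq_divide)
  ultimately show "1 \<le> inner_content UNIV"
    using LIMSEQ_le_const2[of "\<lambda>i. ennreal (1 - 1 / Suc i)" "ennreal (1 - 0)" "inner_content UNIV"]
    by simp
qed

lemma prob_space_limit_measure: "prob_space limit_measure"
proof
  have "space limit_measure = UNIV"
    using sets_eq_imp_space_eq[OF sets_limit_measure] by simp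
  then show "emeasure limit_measure (space limit_measure) = 1"
    using emeasure_limit_measure[of UNIV] outer_content_open[of UNIV] inner_content_UNIV by simp
qed

lemma open_set_weak_limit_limit_measure: "open_set_weak_limit P limit_measure"
  unfolding open_set_weak_limit_def
proof (intro allI impI)
  fix G :: "'a set" assume "open G"
  have "emeasure limit_measure G = inner_content G"
    using emeasure_limit_measure[of G] outer_content_open[OF \<open>open G\<close>] \<open>open G\<close> by simp
  also have "\<dots> \<le> liminf (\<lambda>n. emeasure (P n) G)"
    unfolding inner_content_def
  proof (rule SUP_least)
    fix H assume "H \<in> {H \<in> approx_sets. H \<subseteq> G}"
    then have H: "H \<in> approx_sets" "H \<subseteq> G" by auto
    have "ennreal (content H) = liminf (\<lambda>n. ennreal (measure (P n) H))"
      by (rule lim_imp_Liminf[symmetric]) (auto intro!: tendsto_ennrealI content_LIMSEQ H)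
    also have "\<dots> \<le> liminf (\<lambda>n. emeasure (P n) G)"
      using H approx_set_in_sets \<open>open G\<close> sets_P
      by (intro Liminf_mono always_eventually allI)
        (auto simp: finite_measure.emeasure_eq_measure[OF finite_measure_P, symmetric]
          intro!: emeasure_mono)
    finally show "ennreal (content H) \<le> liminf (\<lambda>n. emeasure (P n) G)" .
  qed
  finally show "emeasure limit_measure G \<le> liminf (\<lambda>n. emeasure (P n) G)" .
qed

end

lemma tight_incseq_compactE:
  fixes P :: "nat \<Rightarrow> 'a::metric_space measure"
  assumes prob: "\<And>n. prob_space (P n)" and sets_P: "\<And>n. sets (P n) = sets borel"
    and tight: "\<And>e. e > 0 \<Longrightarrow> \<exists>K. compact K \<and> (\<forall>n. measure (P n) K \<ge> 1 - e)"
  obtains K where "\<And>i. compact (K i)" "incseq K" "\<And>i n. measure (P n) (K i) \<ge> 1 - 1 / Suc i"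
proof -
  have "\<exists>K. compact K \<and> (\<forall>n. measure (P n) K \<ge> 1 - 1 / Suc i)" for i
    by (rule tight) auto
  then obtain K0 where K0: "\<And>i. compact (K0 i)" "\<And>i n. measure (P n) (K0 i) \<ge> 1 - 1 / Suc i"
    by metis
  define K where "K i = (\<Union>j\<le>i. K0 j)" for i
  have compact_K: "compact (K i)" for i
    unfolding K_def using K0(1) by (intro compact_UN) auto
  have K0_le_K: "measure (P n) (K0 i) \<le> measure (P n) (K i)" for i n
    using compact_K[of i] sets_P[of n] compact_imp_closed unfolding K_def
    by (intro finite_measure.finite_measure_mono[OF prob_space.finite_measure[OF prob]]) auto
  have "measure (P n) (K i) \<ge> 1 - 1 / Suc i" for i n
    using K0(2)[of i n] K0_le_K[where i=i and n=n] by linarith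
  moreover have "incseq K"
    unfolding K_def incseq_def by (meson UN_mono atMost_iff atMost_subset_iff order_refl)
  ultimately show ?thesis
    using that compact_K by blast
qed

theorem prokhorov_open_set_weak_limit:
  fixes P :: "nat \<Rightarrow> 'a::{metric_space,second_countable_topology} measure"
  assumes prob: "\<And>n. prob_space (P n)" and sets_P: "\<And>n. sets (P n) = sets borel"
    and tight: "\<And>e. e > 0 \<Longrightarrow> \<exists>K. compact K \<and> (\<forall>n. measure (P n) K \<ge> 1 - e)"
  obtains r Q where "strict_mono r" "prob_space Q" "sets Q = sets borel" "open_set_weak_limit (P \<circ> r) Q"
proof -
  obtain K where compact_K: "\<And>i. compact (K i)" and "incseq K"
    and measure_K: "\<And>i n. measure (P n) (K i) \<ge> 1 - 1 / Suc i"
    using tight_incseq_compactE[OF prob sets_P tight] by blast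
  obtain B :: "'a set set" where B: "countable B" "topological_basis B"
    using ex_countable_basis by blast
  interpret S: tight_sequence P K B
    by (intro tight_sequence.intro prob sets_P compact_K \<open>incseq K\<close> measure_K B)
  have "bounded (range (\<lambda>n. measure (P n) (from_nat_into S.approx_sets i)))" for i
  proof (rule boundedI)
    fix x assume "x \<in> range (\<lambda>n. measure (P n) (from_nat_into S.approx_sets i))"
    then show "norm x \<le> 1"
      using prob_space.prob_le_1[OF prob] by auto
  qed
  then obtain d where d: "strict_mono d"
    "\<And>i. convergent (\<lambda>k. measure (P (d k)) (from_nat_into S.approx_sets i))"
    by (rule diagonal_subseq_convergent[of "\<lambda>i n. measure (P n) (from_nat_into S.approx_sets i)"]) blast
  have "tight_sequence (P \<circ> d) K B"
    unfolding comp_def by (intro tight_sequence.intro prob sets_P compact_K \<open>incseq K\<close> measure_K B)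
  moreover have "convergent (\<lambda>n. measure ((P \<circ> d) n) H)" if "H \<in> S.approx_sets" for H
    using d(2)[of "to_nat_on S.approx_sets H"] from_nat_into_to_nat_on[OF S.countable_approx_sets that]
    by simp
  ultimately interpret convergent_tight_sequence "P \<circ> d" K B
    by (intro convergent_tight_sequence.intro convergent_tight_sequence_axioms.intro)
  show ?thesis
    by (rule that[OF d(1) prob_space_limit_measure sets_limit_measure open_set_weak_limit_limit_measure])
qed

section \<open>Weak limits of products and images\<close>

lemma sets_pair_borel:
  fixes M :: "'a::second_countable_topology measure" and N :: "'b::second_countable_topology measure"
  assumes "sets M = sets borel" "sets N = sets borel"
  shows "sets (M \<Otimes>\<^sub>M N) = sets borel"
  using sets_pair_measure_cong[OF assms] by (simp only: borel_prod)

lemma eventually_le_add_of_le_liminf: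
  fixes a :: ennreal
  assumes "a \<le> liminf x" "0 < d" "a \<noteq> \<infinity>"
  shows "eventually (\<lambda>n. a \<le> x n + ennreal d) sequentially"
proof (cases "a \<le> ennreal d")
  case True
  then show ?thesis
    by (intro always_eventually allI) (simp add: add_increasing)
next
  case False
  then have "a - ennreal d < a"
    using assms(2,3) by (intro ennreal_between) (auto simp: top.not_eq_extremum not_le intro: order_le_less_trans[OF zero_le])
  then have "a - ennreal d < liminf x"
    using assms(1) by (rule less_le_trans)
  then have "eventually (\<lambda>n. a - ennreal d < x n) sequentially"
    by (rule less_LiminfD)
  then show ?thesis
  proof eventually_elim
    case (elim n)
    then have "a < x n + ennreal d"
      using False by (subst minus_less_iff_ennreal[symmetric]) auto
    then show ?case by simp
  qed
qed

text \<open>Fatou's lemma applied to the sections \<open>{z. (z, w) \<in> G}\<close>, which are open.\<close>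

lemma open_set_weak_limit_pair_left:
  fixes Q :: "nat \<Rightarrow> 'a::second_countable_topology measure"
    and R :: "'b::second_countable_topology measure"
  assumes Q: "\<And>n. prob_space (Q n)" "\<And>n. sets (Q n) = sets borel"
    and Q0: "prob_space Q0" "sets Q0 = sets borel"
    and R: "prob_space R" "sets R = sets borel"
    and lim: "open_set_weak_limit Q Q0"
  shows "open_set_weak_limit (\<lambda>n. Q n \<Otimes>\<^sub>M R) (Q0 \<Otimes>\<^sub>M R)"
  unfolding open_set_weak_limit_def
proof (intro allI impI)
  fix G :: "('a \<times> 'b) set" assume "open G"
  define sec where "sec w = (\<lambda>z. (z, w)) -` G" for w
  have pair: "pair_sigma_finite M R" if "prob_space M" for M :: "'a measure"
    using that R(1) by (simp add: pair_sigma_finite_def prob_space_imp_sigma_finite)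
  have G: "G \<in> sets (M \<Otimes>\<^sub>M R)" if "sets M = sets borel" for M :: "'a measure"
    using \<open>open G\<close> sets_pair_borel[OF that R(2)] by auto
  have emeasure_sec: "emeasure (M \<Otimes>\<^sub>M R) G = (\<integral>\<^sup>+ w. emeasure M (sec w) \<partial>R)"
    if "prob_space M" "sets M = sets borel" for M
    unfolding sec_def by (rule pair_sigma_finite.emeasure_pair_measure_alt2[OF pair G, OF that])
  have "emeasure (Q0 \<Otimes>\<^sub>M R) G = (\<integral>\<^sup>+ w. emeasure Q0 (sec w) \<partial>R)"
    by (rule emeasure_sec[OF Q0])
  also have "\<dots> \<le> (\<integral>\<^sup>+ w. liminf (\<lambda>n. emeasure (Q n) (sec w)) \<partial>R)"
    unfolding sec_def using \<open>open G\<close>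
    by (intro nn_integral_mono open_set_weak_limitD[OF lim] open_vimage continuous_intros)
  also have "\<dots> \<le> liminf (\<lambda>n. \<integral>\<^sup>+ w. emeasure (Q n) (sec w) \<partial>R)"
    unfolding sec_def
    by (intro nn_integral_liminf pair_sigma_finite.measurable_emeasure_Pair2[OF pair G] Q)
  also have "\<dots> = liminf (\<lambda>n. emeasure (Q n \<Otimes>\<^sub>M R) G)"
    using emeasure_sec[OF Q] by presburger
  finally show "emeasure (Q0 \<Otimes>\<^sub>M R) G \<le> liminf (\<lambda>n. emeasure (Q n \<Otimes>\<^sub>M R) G)" .
qed

lemma open_eq_UN_Times:
  fixes G :: "('a::second_countable_topology \<times> 'b::second_countable_topology) set"
  assumes "open G"
  obtains A C where "\<And>i::nat. open (A i)" "\<And>i. open (C i)" "G = (\<Union>i. A i \<times> C i)"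
proof -
  obtain BA :: "'a set set" where BA: "countable BA" "topological_basis BA"
    using ex_countable_basis by blast
  obtain BC :: "'b set set" where BC: "countable BC" "topological_basis BC"
    using ex_countable_basis by blast
  \<comment> \<open>The pair \<open>({}, {})\<close> only serves to make the index set nonempty.\<close>
  define R where "R = insert ({}, {}) {p \<in> BA \<times> BC. fst p \<times> snd p \<subseteq> G}"
  have "countable R"
    unfolding R_def using BA(1) BC(1) by (auto intro: countable_subset[of _ "BA \<times> BC"])
  then have range: "range (from_nat_into R) = R"
    by (intro range_from_nat_into) (auto simp: R_def)
  have open_R: "open (fst p)" "open (snd p)" if "p \<in> R" for p
    using that topological_basis_open[OF BA(2)] topological_basis_open[OF BC(2)]
    by (auto simp: R_def)
  have "G = (\<Union>p\<in>R. fst p \<times> snd p)"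
  proof (intro antisym subsetI)
    fix x assume "x \<in> G"
    then obtain U V where "open U" "open V" "x \<in> U \<times> V" "U \<times> V \<subseteq> G"
      using \<open>open G\<close> unfolding open_prod_def by metis
    moreover obtain U' where "U' \<in> BA" "fst x \<in> U'" "U' \<subseteq> U"
      using topological_basisE[OF BA(2) \<open>open U\<close>, of "fst x"] \<open>x \<in> U \<times> V\<close> by (auto simp: mem_Times_iff)
    moreover obtain V' where "V' \<in> BC" "snd x \<in> V'" "V' \<subseteq> V"
      using topological_basisE[OF BC(2) \<open>open V\<close>, of "snd x"] \<open>x \<in> U \<times> V\<close> by (auto simp: mem_Times_iff)
    ultimately have "(U', V') \<in> R" "x \<in> U' \<times> V'"
      unfolding R_def by (auto simp: mem_Times_iff)
    then show "x \<in> (\<Union>p\<in>R. fst p \<times> snd p)"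
      by force
  qed (auto simp: R_def)
  also have "\<dots> = (\<Union>i. fst (from_nat_into R i) \<times> snd (from_nat_into R i))"
    by (subst range[symmetric]) simp
  finally have "G = (\<Union>i. fst (from_nat_into R i) \<times> snd (from_nat_into R i))" .
  moreover have "from_nat_into R i \<in> R" for i
    by (rule from_nat_into) (simp add: R_def)
  ultimately show ?thesis
    using open_R by (intro that[of "\<lambda>i. fst (from_nat_into R i)" "\<lambda>i. snd (from_nat_into R i)"]) auto
qed

text \<open>
  The sections of a finite union of open boxes are among the finitely many open sets
  \<open>\<Union>i\<in>S. C i\<close>, so the portmanteau inequality holds for all of them at once, up to \<open>\<delta>\<close>.
\<close>

lemma eventually_emeasure_pair_UN_Times_le:
  fixes Q :: "nat \<Rightarrow> 'a::second_countable_topology measure" and A C :: "nat \<Rightarrow> 'a set"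
  assumes Q: "\<And>n. prob_space (Q n)" "\<And>n. sets (Q n) = sets borel"
    and Q0: "prob_space Q0" "sets Q0 = sets borel"
    and lim: "open_set_weak_limit Q Q0"
    and A: "\<And>i. open (A i)" and C: "\<And>i. open (C i)" and "0 < \<delta>"
  shows "eventually (\<lambda>n. emeasure (Q n \<Otimes>\<^sub>M Q0) (\<Union>i<k. A i \<times> C i)
    \<le> emeasure (Q n \<Otimes>\<^sub>M Q n) (\<Union>i<k. A i \<times> C i) + ennreal \<delta>) sequentially"
proof -
  define F where "F = (\<Union>i<k. A i \<times> C i)"
  define Sec where "Sec S = (\<Union>i\<in>S. C i)" for S
  have F: "F \<in> sets (M \<Otimes>\<^sub>M N)" if "sets M = sets borel" "sets N = sets borel" for M N :: "'a measure"
    unfolding F_def sets_pair_borel[OF that] using A C by (intro borel_open open_UN ballI open_Times)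
  have sec: "Pair z -` F = Sec {i\<in>{..<k}. z \<in> A i}" for z
    unfolding F_def Sec_def by auto
  have "emeasure Q0 X \<noteq> \<infinity>" for X
    using prob_space.emeasure_le_1[OF Q0(1), of X] by (auto simp: top_unique)
  then have "eventually (\<lambda>n. \<forall>S\<in>Pow {..<k}. emeasure Q0 (Sec S) \<le> emeasure (Q n) (Sec S) + ennreal \<delta>)
      sequentially"
    unfolding Sec_def using C \<open>0 < \<delta>\<close>
    by (intro eventually_ball_finite ballI eventually_le_add_of_le_liminf open_set_weak_limitD[OF lim] open_UN)
      auto
  then show ?thesis
    unfolding F_def[symmetric]
  proof eventually_elim
    case (elim n)
    have "emeasure (Q n \<Otimes>\<^sub>M Q0) F = (\<integral>\<^sup>+ z. emeasure Q0 (Pair z -` F) \<partial>Q n)"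
      using prob_space_imp_sigma_finite[OF Q0(1)] F[OF Q(2) Q0(2)]
      by (rule sigma_finite_measure.emeasure_pair_measure_alt)
    also have "\<dots> \<le> (\<integral>\<^sup>+ z. emeasure (Q n) (Pair z -` F) + ennreal \<delta> \<partial>Q n)"
      using elim by (intro nn_integral_mono) (auto simp only: sec)
    also have "\<dots> = (\<integral>\<^sup>+ z. emeasure (Q n) (Pair z -` F) \<partial>Q n) + (\<integral>\<^sup>+ z. ennreal \<delta> \<partial>Q n)"
      using prob_space_imp_sigma_finite[OF Q(1)] F[OF Q(2) Q(2)]
      by (intro nn_integral_add sigma_finite_measure.measurable_emeasure_Pair) auto
    also have "(\<integral>\<^sup>+ z. emeasure (Q n) (Pair z -` F) \<partial>Q n) = emeasure (Q n \<Otimes>\<^sub>M Q n) F"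
      using prob_space_imp_sigma_finite[OF Q(1)] F[OF Q(2) Q(2)]
      by (rule sigma_finite_measure.emeasure_pair_measure_alt[symmetric])
    also have "(\<integral>\<^sup>+ z. ennreal \<delta> \<partial>Q n) = ennreal \<delta>"
      using prob_space.emeasure_space_1[OF Q(1)] by simp
    finally show ?case .
  qed
qed

lemma open_set_weak_limit_pair:
  fixes Q :: "nat \<Rightarrow> 'a::second_countable_topology measure"
  assumes Q: "\<And>n. prob_space (Q n)" "\<And>n. sets (Q n) = sets borel"
    and Q0: "prob_space Q0" "sets Q0 = sets borel"
    and lim: "open_set_weak_limit Q Q0"
  shows "open_set_weak_limit (\<lambda>n. Q n \<Otimes>\<^sub>M Q n) (Q0 \<Otimes>\<^sub>M Q0)"
  unfolding open_set_weak_limit_def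
proof (intro allI impI)
  fix G :: "('a \<times> 'a) set" assume "open G"
  then obtain A C :: "nat \<Rightarrow> 'a set" where A: "\<And>i. open (A i)" and C: "\<And>i. open (C i)" and G: "G = (\<Union>i. A i \<times> C i)"
    by (rule open_eq_UN_Times) auto
  define F where "F k = (\<Union>i<k. A i \<times> C i)" for k
  have "open (F k)" for k
    unfolding F_def using A C by (intro open_UN ballI open_Times)
  then have F: "F k \<in> sets (M \<Otimes>\<^sub>M N)" if "sets M = sets borel" "sets N = sets borel" for k and M N :: "'a measure"
    unfolding sets_pair_borel[OF that] by simp
  have "incseq F"
    unfolding incseq_def F_def by (meson UN_mono lessThan_subset_iff order_refl)
  have "(\<Union>k. F k) = G"
    unfolding F_def G by auto
  have "emeasure (Q0 \<Otimes>\<^sub>M Q0) G = (SUP k. emeasure (Q0 \<Otimes>\<^sub>M Q0) (F k))"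
    unfolding \<open>(\<Union>k. F k) = G\<close>[symmetric]
    by (rule SUP_emeasure_incseq[symmetric]) (use F[OF Q0(2) Q0(2)] \<open>incseq F\<close> in auto)
  also have "\<dots> \<le> liminf (\<lambda>n. emeasure (Q n \<Otimes>\<^sub>M Q n) G)"
  proof (rule SUP_least, rule ennreal_le_epsilon)
    fix k and \<delta> :: real assume "0 < \<delta>"
    have "emeasure (Q0 \<Otimes>\<^sub>M Q0) (F k) \<le> liminf (\<lambda>n. emeasure (Q n \<Otimes>\<^sub>M Q0) (F k))"
      using open_set_weak_limit_pair_left[OF Q Q0 Q0 lim] \<open>open (F k)\<close> by (rule open_set_weak_limitD)
    also have "\<dots> \<le> liminf (\<lambda>n. emeasure (Q n \<Otimes>\<^sub>M Q n) G + ennreal \<delta>)"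
    proof (intro Liminf_mono)
      have "eventually (\<lambda>n. emeasure (Q n \<Otimes>\<^sub>M Q0) (F k)
          \<le> emeasure (Q n \<Otimes>\<^sub>M Q n) (F k) + ennreal \<delta>) sequentially"
        unfolding F_def using Q Q0 lim A C \<open>0 < \<delta>\<close> by (rule eventually_emeasure_pair_UN_Times_le)
      then show "\<forall>\<^sub>F n in sequentially. emeasure (Q n \<Otimes>\<^sub>M Q0) (F k) \<le> emeasure (Q n \<Otimes>\<^sub>M Q n) G + ennreal \<delta>"
      proof eventually_elim
        case (elim n)
        have "emeasure (Q n \<Otimes>\<^sub>M Q n) (F k) \<le> emeasure (Q n \<Otimes>\<^sub>M Q n) G"
          using F[OF Q(2) Q(2)] \<open>(\<Union>k. F k) = G\<close> by (intro emeasure_mono) auto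
        with elim show ?case
          by (meson add_right_mono order_trans)
      qed
    qed
    also have "\<dots> = liminf (\<lambda>n. emeasure (Q n \<Otimes>\<^sub>M Q n) G) + ennreal \<delta>"
      by (rule Liminf_add_const) simp
    finally show "emeasure (Q0 \<Otimes>\<^sub>M Q0) (F k) \<le> liminf (\<lambda>n. emeasure (Q n \<Otimes>\<^sub>M Q n) G) + ennreal \<delta>" .
  qed
  finally show "emeasure (Q0 \<Otimes>\<^sub>M Q0) G \<le> liminf (\<lambda>n. emeasure (Q n \<Otimes>\<^sub>M Q n) G)" .
qed

lemma prob_space_eqI_emeasure_le:
  assumes "prob_space M" "prob_space N" and sets: "sets M = sets N"
    and le: "\<And>A. A \<in> sets M \<Longrightarrow> emeasure M A \<le> emeasure N A"
  shows "M = N"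
proof (rule measure_eqI[OF sets])
  interpret M: prob_space M by fact
  interpret N: prob_space N by fact
  fix A assume A: "A \<in> sets M"
  have space: "space M = space N"
    using sets by (rule sets_eq_imp_space_eq)
  have "M.prob A \<le> N.prob A" "M.prob (space M - A) \<le> N.prob (space N - A)"
    using le[OF A] le[OF sets.compl_sets[OF A]] space by (simp_all add: M.emeasure_eq_measure N.emeasure_eq_measure)
  moreover have "M.prob (space M - A) = 1 - M.prob A" "N.prob (space N - A) = 1 - N.prob A"
    using A sets by (simp_all add: M.prob_compl N.prob_compl)
  ultimately have "M.prob A = N.prob A"
    by linarith
  then show "emeasure M A = emeasure N A"
    by (simp add: M.emeasure_eq_measure N.emeasure_eq_measure)
qed

lemma open_set_weak_limit_distr:
  fixes Q :: "nat \<Rightarrow> 'a::topological_space measure" and M :: "'b::topological_space measure"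
  assumes Q: "\<And>n. sets (Q n) = sets borel" and P: "sets P = sets borel" and M: "sets M = sets borel"
    and f: "continuous_on UNIV f" and lim: "open_set_weak_limit Q P"
  shows "open_set_weak_limit (\<lambda>n. distr (Q n) M f) (distr P M f)"
  unfolding open_set_weak_limit_def
proof (intro allI impI)
  fix U :: "'b set" assume "open U"
  have distr: "emeasure (distr N M f) U = emeasure N (f -` U)" if "sets N = sets borel" for N :: "'a measure"
  proof -
    have "f \<in> measurable N M"
      using borel_measurable_continuous_onI[OF f] by (simp add: measurable_cong_sets[OF that M])
    then show ?thesis
      using \<open>open U\<close> M sets_eq_imp_space_eq[OF that] by (subst emeasure_distr) auto
  qed
  have "emeasure P (f -` U) \<le> liminf (\<lambda>n. emeasure (Q n) (f -` U))"
    using lim open_vimage[OF \<open>open U\<close> f] by (rule open_set_weak_limitD)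
  then show "emeasure (distr P M f) U \<le> liminf (\<lambda>n. emeasure (distr (Q n) M f) U)"
    by (simp add: distr[OF P] distr[OF Q])
qed

lemma emeasure_le_of_emeasure_open_le:
  fixes M :: "'a::{second_countable_topology,complete_space} measure"
  assumes "sets N = sets borel" "prob_space M" "sets M = sets borel"
    and open_le: "\<And>U. open U \<Longrightarrow> emeasure N U \<le> emeasure M U" and A: "A \<in> sets borel"
  shows "emeasure N A \<le> emeasure M A"
proof -
  have "emeasure N A \<le> emeasure M U" if "A \<subseteq> U" "open U" for U
    using assms(1) that A by (intro order_trans[OF emeasure_mono open_le]) auto
  then show ?thesis
    using outer_regular[OF assms(3) _ A] prob_space.emeasure_space_1[OF assms(2)]
    by (auto intro!: INF_greatest)
qed

lemma distr_eq_of_open_set_weak_limit: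
  fixes Q :: "nat \<Rightarrow> 'a::topological_space measure"
    and M :: "'b::{second_countable_topology,complete_space} measure"
  assumes P: "prob_space P" "sets P = sets borel" and M: "prob_space M" "sets M = sets borel"
    and Q: "\<And>n. sets (Q n) = sets borel" "\<And>n. distr (Q n) M f = M"
    and f: "continuous_on UNIV f" and lim: "open_set_weak_limit Q P"
  shows "distr P M f = M"
proof (rule prob_space_eqI_emeasure_le)
  show "prob_space (distr P M f)"
    using P borel_measurable_continuous_onI[OF f]
    by (intro prob_space.prob_space_distr) (simp_all add: measurable_cong_sets[OF P(2) M(2)])
  fix A assume A: "A \<in> sets (distr P M f)"
  show "emeasure (distr P M f) A \<le> emeasure M A"
  proof (rule emeasure_le_of_emeasure_open_le)
    fix U :: "'b set" assume "open U"
    have "emeasure (distr P M f) U \<le> liminf (\<lambda>n. emeasure (distr (Q n) M f) U)"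
      using open_set_weak_limit_distr[OF Q(1) P(2) M(2) f lim] \<open>open U\<close> by (rule open_set_weak_limitD)
    then show "emeasure (distr P M f) U \<le> emeasure M U"
      by (simp add: Q(2) Liminf_const)
  qed (use M A in simp_all)
qed (use M in simp_all)

lemma measure_open_le_of_open_set_weak_limit:
  assumes Q: "\<And>n. prob_space (Q n)" "\<And>n. sets (Q n) = sets borel"
    and Q0: "prob_space Q0" "sets Q0 = sets borel" and lim: "open_set_weak_limit Q Q0"
    and "open G" and bound: "eventually (\<lambda>n. measure (Q n) G \<le> b n) sequentially" and b: "b \<longlonglongrightarrow> c"
  shows "measure Q0 G \<le> c"
proof -
  have emeasure: "emeasure M G = ennreal (measure M G)" if "prob_space M" "sets M = sets borel" for M
    using \<open>open G\<close> that by (intro finite_measure.emeasure_eq_measure prob_space.finite_measure) auto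
  have "0 \<le> c"
    using bound by (intro LIMSEQ_le_const[OF b]) (auto simp: eventually_sequentially intro: order_trans[OF measure_nonneg])
  have "emeasure Q0 G \<le> liminf (\<lambda>n. emeasure (Q n) G)"
    using lim \<open>open G\<close> by (rule open_set_weak_limitD)
  also have "\<dots> \<le> liminf (\<lambda>n. ennreal (b n))"
    using bound by (intro Liminf_mono) (auto elim!: eventually_mono simp: emeasure[OF Q] intro: ennreal_leI)
  also have "\<dots> = ennreal c"
    by (rule lim_imp_Liminf) (auto intro: tendsto_ennrealI b)
  finally show ?thesis
    using \<open>0 \<le> c\<close> by (simp add: emeasure[OF Q0])
qed

section \<open>The Eurandom distance\<close>

text \<open>
  The minimiser is the infimum \<open>s\<close> of \<open>{e \<ge> 0. f e \<le> e}\<close>: right-continuity gives \<open>f s \<le> s\<close>, and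
  for \<open>e' < s\<close> antitonicity forces \<open>f e' \<ge> s\<close>.
\<close>

lemma max_antimono_attains_min:
  fixes f :: "real \<Rightarrow> real"
  assumes antimono: "\<And>x y. 0 \<le> x \<Longrightarrow> x \<le> y \<Longrightarrow> f y \<le> f x"
    and bounded: "\<And>x. f x \<le> c"
    and right_cont: "\<And>x. 0 \<le> x \<Longrightarrow> (\<lambda>n. f (x + inverse (real (Suc n)))) \<longlonglongrightarrow> f x"
  shows "\<exists>e\<ge>0. \<forall>e'\<ge>0. max e (f e) \<le> max e' (f e')"
proof -
  define S where "S = {e. 0 \<le> e \<and> f e \<le> e}"
  have "max c 0 \<in> S"
    unfolding S_def using bounded[of "max c 0"] by auto
  then have "S \<noteq> {}" by auto
  have "bdd_below S"
    unfolding S_def by (auto intro!: bdd_belowI[of _ 0])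
  define s where "s = Inf S"
  have "0 \<le> s"
    unfolding s_def using \<open>S \<noteq> {}\<close> by (intro cInf_greatest) (auto simp: S_def)
  have S_up: "e' \<in> S" if "e \<in> S" "e \<le> e'" for e e'
    using that antimono[of e e'] unfolding S_def by auto
  have "s + inverse (real (Suc n)) \<in> S" for n
  proof -
    have "Inf S < s + inverse (real (Suc n))"
      unfolding s_def by simp
    then obtain e where "e \<in> S" "e < s + inverse (real (Suc n))"
      using cInf_less_iff[OF \<open>S \<noteq> {}\<close> \<open>bdd_below S\<close>] by auto
    then show ?thesis
      using S_up by auto
  qed
  moreover have "(\<lambda>n. s + inverse (real (Suc n))) \<longlonglongrightarrow> s"
    using tendsto_add[OF tendsto_const LIMSEQ_inverse_real_of_nat, of s] by simp
  ultimately have "f s \<le> s"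
    using LIMSEQ_le[OF right_cont[OF \<open>0 \<le> s\<close>]] unfolding S_def by auto
  have "max s (f s) \<le> max e' (f e')" if "0 \<le> e'" for e'
  proof (cases "s \<le> e'")
    case True
    then show ?thesis
      using \<open>f s \<le> s\<close> by auto
  next
    case False
    have "s \<le> f e'"
    proof (rule ccontr)
      assume "\<not> s \<le> f e'"
      define m where "m = (max e' (f e') + s) / 2"
      have "e' < m" "m < s" "f e' < m"
        using False \<open>\<not> s \<le> f e'\<close> unfolding m_def by auto
      then have "m \<in> S"
        using antimono[OF that, of m] that unfolding S_def by auto
      then have "s \<le> m"
        unfolding s_def using \<open>bdd_below S\<close> by (rule cInf_lower)
      then show False
        using \<open>m < s\<close> by simp
    qed
    then show ?thesis
      using \<open>f s \<le> s\<close> by auto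
  qed
  then show ?thesis
    using \<open>0 \<le> s\<close> by blast
qed

lemma distortion_gt_eq:
  "distortion_gt e = {p. e < \<bar>dist (fst (fst p)) (fst (snd p)) - dist (snd (fst p)) (snd (snd p))\<bar>}"
  unfolding distortion_gt_def by auto

lemma open_distortion_gt: "open (distortion_gt e)"
  unfolding distortion_gt_eq by (intro open_Collect_less continuous_intros)

lemma distortion_gt_antimono: "e \<le> e' \<Longrightarrow> distortion_gt e' \<subseteq> distortion_gt e"
  unfolding distortion_gt_eq by auto

lemma distortion_gt_in_sets_pair:
  fixes \<pi> :: "('a::{metric_space,second_countable_topology} \<times> 'b::{metric_space,second_countable_topology}) measure"
  assumes "sets \<pi> = sets borel"
  shows "distortion_gt e \<in> sets (\<pi> \<Otimes>\<^sub>M \<pi>)"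
  unfolding sets_pair_borel[OF assms assms] using open_distortion_gt by (rule borel_open)

lemma distortion_gt_eq_UN: "distortion_gt e = (\<Union>n. distortion_gt (e + inverse (real (Suc n))))"
proof (intro antisym subsetI)
  fix p assume "p \<in> distortion_gt e"
  then have "e < \<bar>dist (fst (fst p)) (fst (snd p)) - dist (snd (fst p)) (snd (snd p))\<bar>"
    (is "e < ?v") unfolding distortion_gt_eq by auto
  then obtain n where "inverse (real (Suc n)) < ?v - e"
    using reals_Archimedean by (metis diff_gt_0_iff_gt)
  then have "p \<in> distortion_gt (e + inverse (real (Suc n)))"
    unfolding distortion_gt_eq by simp
  then show "p \<in> (\<Union>n. distortion_gt (e + inverse (real (Suc n))))"
    by blast
next
  fix p assume "p \<in> (\<Union>n. distortion_gt (e + inverse (real (Suc n))))"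
  then obtain n where "p \<in> distortion_gt (e + inverse (real (Suc n)))"
    by blast
  moreover have "distortion_gt (e + inverse (real (Suc n))) \<subseteq> distortion_gt e"
    by (rule distortion_gt_antimono) simp
  ultimately show "p \<in> distortion_gt e"
    by blast
qed

lemma measure_distortion_gt_right_continuous:
  fixes M :: "(('a::metric_space \<times> 'b::metric_space) \<times> ('a \<times> 'b)) measure"
  assumes "finite_measure M" "\<And>e. distortion_gt e \<in> sets M"
  shows "(\<lambda>n. measure M (distortion_gt (x + inverse (real (Suc n))))) \<longlonglongrightarrow> measure M (distortion_gt x)"
proof -
  interpret finite_measure M by fact
  have "incseq (\<lambda>n. distortion_gt (x + inverse (real (Suc n))))"
    by (intro incseq_SucI distortion_gt_antimono add_left_mono le_imp_inverse_le) auto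
  then show ?thesis
    using finite_Lim_measure_incseq[of "\<lambda>n. distortion_gt (x + inverse (real (Suc n)))"] assms(2)
    by (auto simp only: distortion_gt_eq_UN[of x, symmetric])
qed

lemma eur_cost_nonneg: "0 \<le> eur_cost \<pi> e"
  unfolding eur_cost_def by (simp add: max.coboundedI2)

lemma eur_cost_attains_min:
  fixes \<pi> :: "('a::{metric_space,second_countable_topology} \<times> 'b::{metric_space,second_countable_topology}) measure"
  assumes "prob_space \<pi>" "sets \<pi> = sets borel"
  shows "\<exists>\<epsilon>\<ge>0. \<forall>\<epsilon>'\<ge>0. eur_cost \<pi> \<epsilon> \<le> eur_cost \<pi> \<epsilon>'"
proof -
  interpret M: prob_space "\<pi> \<Otimes>\<^sub>M \<pi>"
    using assms(1) by (rule prob_space_pair[OF _ assms(1)])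
  have "\<exists>e\<ge>0. \<forall>e'\<ge>0. max e (M.prob (distortion_gt e)) \<le> max e' (M.prob (distortion_gt e'))"
    using distortion_gt_in_sets_pair[OF assms(2)]
    by (intro max_antimono_attains_min[where c=1] M.finite_measure_mono distortion_gt_antimono
        measure_distortion_gt_right_continuous M.finite_measure M.prob_le_1)
  then show ?thesis
    unfolding eur_cost_def .
qed

lemma couplingsD:
  assumes "\<pi> \<in> couplings mX mY"
  shows "prob_space \<pi>" "sets \<pi> = sets borel" "distr \<pi> mX fst = mX" "distr \<pi> mY snd = mY"
  using assms unfolding couplings_def by auto

lemma mm_spaceD:
  assumes "mm_space M"
  shows "prob_space M" "sets M = sets borel"
  using assms unfolding mm_space_def by auto

lemma pair_measure_in_couplings:
  assumes "mm_space mX" "mm_space mY"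
  shows "mX \<Otimes>\<^sub>M mY \<in> couplings mX mY"
proof -
  interpret X: prob_space mX by (rule mm_spaceD[OF assms(1)])
  interpret Y: prob_space mY by (rule mm_spaceD[OF assms(2)])
  interpret XY: pair_prob_space mX mY ..
  have "distr (mX \<Otimes>\<^sub>M mY) mY snd = mY"
  proof (rule measure_eqI)
    fix A assume A: "A \<in> sets (distr (mX \<Otimes>\<^sub>M mY) mY snd)"
    then have "emeasure (distr (mX \<Otimes>\<^sub>M mY) mY snd) A = emeasure (mX \<Otimes>\<^sub>M mY) (space mX \<times> A)"
      by (auto simp: emeasure_distr space_pair_measure dest: sets.sets_into_space
          intro!: arg_cong2[where f=emeasure])
    with A show "emeasure (distr (mX \<Otimes>\<^sub>M mY) mY snd) A = emeasure mY A"
      by (simp add: Y.emeasure_pair_measure_Times X.emeasure_space_1)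
  qed simp
  then show ?thesis
    unfolding couplings_def using Y.distr_pair_fst XY.prob_space_axioms
      sets_pair_borel[OF mm_spaceD(2)[OF assms(1)] mm_spaceD(2)[OF assms(2)]]
    by auto
qed

lemma exists_compact_measure_compl_less:
  fixes M :: "'a::{second_countable_topology,complete_space} measure"
  assumes "prob_space M" "sets M = sets borel" "0 < e"
  obtains K where "compact K" "measure M (- K) < e"
proof -
  interpret prob_space M by fact
  have space: "space M = UNIV"
    using sets_eq_imp_space_eq[OF assms(2)] by simp
  have "emeasure M UNIV = (SUP K \<in> {K. K \<subseteq> UNIV \<and> compact K}. emeasure M K)"
    by (rule inner_regular[OF assms(2)]) (auto simp: space)
  then have "\<exists>K\<in>{K. K \<subseteq> UNIV \<and> compact K}. 1 < emeasure M K + ennreal e"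
    using emeasure_space_1 space assms(3) by (intro SUP_approx_ennreal) (auto intro: compact_empty)
  then obtain K where K: "compact K" "1 < emeasure M K + ennreal e"
    by auto
  have "K \<in> sets M"
    unfolding assms(2) by (rule borel_closed[OF compact_imp_closed[OF K(1)]])
  then have "1 < measure M K + e" "measure M (- K) = 1 - measure M K"
    using K(2) assms(3) prob_compl[of K] space
    by (simp_all add: emeasure_eq_measure ennreal_plus[symmetric] Compl_eq_Diff_UNIV del: ennreal_plus)
  then show ?thesis
    using that K(1) by auto
qed

lemma coupling_measure_Times_ge:
  assumes "\<pi> \<in> couplings mX mY" "mm_space mX" "mm_space mY" "compact KX" "compact KY"
  shows "measure \<pi> (KX \<times> KY) \<ge> 1 - measure mX (- KX) - measure mY (- KY)"
proof -
  note \<pi> = couplingsD[OF assms(1)] and X = mm_spaceD[OF assms(2)] and Y = mm_spaceD[OF assms(3)]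
  interpret prob_space \<pi> by (rule \<pi>(1))
  have space: "space \<pi> = UNIV"
    using sets_eq_imp_space_eq[OF \<pi>(2)] by simp
  have fst: "fst \<in> measurable \<pi> mX" and snd: "snd \<in> measurable \<pi> mY"
    by (simp_all add: measurable_cong_sets[OF \<pi>(2) X(2)] measurable_cong_sets[OF \<pi>(2) Y(2)])
      (intro borel_measurable_continuous_onI continuous_intros)+
  have compl_in_sets: "- KX \<in> sets mX" "- KY \<in> sets mY"
    using assms(4,5) X(2) Y(2) by (auto intro!: borel_open compact_imp_closed)
  have "measure \<pi> (fst -` (- KX)) = measure mX (- KX)"
    using measure_distr[OF fst compl_in_sets(1)] \<pi>(3) space by simp
  moreover have "measure \<pi> (snd -` (- KY)) = measure mY (- KY)"
    using measure_distr[OF snd compl_in_sets(2)] \<pi>(4) space by simp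
  moreover have "measure \<pi> (- (KX \<times> KY)) \<le> measure \<pi> (fst -` (- KX)) + measure \<pi> (snd -` (- KY))"
  proof -
    have "fst -` (- KX) \<in> sets \<pi>" "snd -` (- KY) \<in> sets \<pi>"
      using measurable_sets[OF fst compl_in_sets(1)] measurable_sets[OF snd compl_in_sets(2)] space
      by simp_all
    then show ?thesis
      using measure_Un_le finite_measure_mono[of "- (KX \<times> KY)" "fst -` (- KX) \<union> snd -` (- KY)"]
      by fastforce
  qed
  moreover have "KX \<times> KY \<in> sets \<pi>"
    unfolding \<pi>(2) using assms(4,5) by (intro borel_closed compact_imp_closed compact_Times)
  then have "measure \<pi> (- (KX \<times> KY)) = 1 - measure \<pi> (KX \<times> KY)"
    using prob_compl space by (simp add: Compl_eq_Diff_UNIV)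
  ultimately show ?thesis
    by linarith
qed

lemma couplings_tight:
  assumes "mm_space mX" "mm_space mY" "0 < \<delta>"
  obtains K where "compact K" "\<And>\<pi>. \<pi> \<in> couplings mX mY \<Longrightarrow> measure \<pi> K \<ge> 1 - \<delta>"
proof -
  obtain KX where KX: "compact KX" "measure mX (- KX) < \<delta>/2"
    using exists_compact_measure_compl_less[OF mm_spaceD[OF assms(1)], of "\<delta>/2"] assms(3) by auto
  obtain KY where KY: "compact KY" "measure mY (- KY) < \<delta>/2"
    using exists_compact_measure_compl_less[OF mm_spaceD[OF assms(2)], of "\<delta>/2"] assms(3) by auto
  have "measure \<pi> (KX \<times> KY) \<ge> 1 - \<delta>" if "\<pi> \<in> couplings mX mY" for \<pi>
    using coupling_measure_Times_ge[OF that assms(1,2) KX(1) KY(1)] KX(2) KY(2) by linarith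
  then show ?thesis
    using that[of "KX \<times> KY"] KX(1) KY(1) compact_Times by blast
qed

lemma d_Eur_le_eur_cost:
  assumes "\<pi> \<in> couplings mX mY" "0 \<le> \<epsilon>"
  shows "d_Eur mX mY \<le> eur_cost \<pi> \<epsilon>"
proof -
  have bdd: "bdd_below ((\<lambda>\<epsilon>. eur_cost \<pi> \<epsilon>) ` {0..})"
    by (rule bdd_belowI[of _ 0]) (auto simp: eur_cost_nonneg)
  have "0 \<le> (INF \<epsilon>\<in>{0..}. eur_cost \<pi>' \<epsilon>)" for \<pi>' :: "('a \<times> 'b) measure"
    by (rule cINF_greatest) (auto simp: eur_cost_nonneg)
  then have "d_Eur mX mY \<le> (INF \<epsilon>\<in>{0..}. eur_cost \<pi> \<epsilon>)"
    unfolding d_Eur_def using assms(1) by (intro cINF_lower bdd_belowI[of _ 0]) auto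
  also have "\<dots> \<le> eur_cost \<pi> \<epsilon>"
    using assms(2) by (intro cINF_lower bdd) auto
  finally show ?thesis .
qed

lemma exists_coupling_eur_cost_less:
  assumes "couplings mX mY \<noteq> {}" "0 < \<delta>"
  shows "\<exists>\<pi>\<in>couplings mX mY. \<exists>\<epsilon>\<ge>0. eur_cost \<pi> \<epsilon> < d_Eur mX mY + \<delta>"
proof -
  define V where "V \<pi> = (INF \<epsilon>\<in>{0..}. eur_cost \<pi> \<epsilon>)" for \<pi> :: "('a \<times> 'b) measure"
  have V_nonneg: "0 \<le> V \<pi>" for \<pi>
    unfolding V_def by (rule cINF_greatest) (auto simp: eur_cost_nonneg)
  have "(INF \<pi>\<in>couplings mX mY. V \<pi>) < d_Eur mX mY + \<delta>"
    unfolding d_Eur_def V_def using assms(2) by simp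
  moreover have "bdd_below (V ` couplings mX mY)"
    using V_nonneg by (intro bdd_belowI[of _ 0]) auto
  ultimately obtain \<pi> where \<pi>: "\<pi> \<in> couplings mX mY" "V \<pi> < d_Eur mX mY + \<delta>"
    using cINF_less_iff[OF assms(1)] by blast
  moreover have "bdd_below ((\<lambda>\<epsilon>. eur_cost \<pi> \<epsilon>) ` {0..})"
    by (rule bdd_belowI[of _ 0]) (auto simp: eur_cost_nonneg)
  ultimately obtain \<epsilon> where "0 \<le> \<epsilon>" "eur_cost \<pi> \<epsilon> < d_Eur mX mY + \<delta>"
    unfolding V_def using cINF_less_iff[of "{0::real..}" "\<lambda>\<epsilon>. eur_cost \<pi> \<epsilon>"] by auto
  then show ?thesis
    using \<pi>(1) by blast
qed

lemma eur_cost_le_of_open_set_weak_limit: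
  fixes \<pi> :: "nat \<Rightarrow> ('a::{metric_space,second_countable_topology} \<times> 'b::{metric_space,second_countable_topology}) measure"
  assumes \<pi>: "\<And>n. prob_space (\<pi> n)" "\<And>n. sets (\<pi> n) = sets borel"
    and P: "prob_space P" "sets P = sets borel" and lim: "open_set_weak_limit \<pi> P"
    and \<epsilon>: "\<epsilon> \<longlonglongrightarrow> e0" and bound: "\<And>n. eur_cost (\<pi> n) (\<epsilon> n) \<le> b n" and b: "b \<longlonglongrightarrow> c"
  shows "eur_cost P e0 \<le> c"
proof -
  note pairs = prob_space_pair[OF \<pi>(1) \<pi>(1)] sets_pair_borel[OF \<pi>(2) \<pi>(2)]
  have "e0 \<le> c"
    using bound by (intro LIMSEQ_le[OF \<epsilon> b]) (auto simp: eur_cost_def intro: order_trans)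
  have above: "measure (P \<Otimes>\<^sub>M P) (distortion_gt e) \<le> c" if "e0 < e" for e
  proof (rule measure_open_le_of_open_set_weak_limit[OF pairs _ _ open_set_weak_limit_pair[OF \<pi> P lim]])
    show "eventually (\<lambda>n. measure (\<pi> n \<Otimes>\<^sub>M \<pi> n) (distortion_gt e) \<le> b n) sequentially"
      using order_tendstoD(2)[OF \<epsilon> that]
    proof eventually_elim
      case (elim n)
      have "measure (\<pi> n \<Otimes>\<^sub>M \<pi> n) (distortion_gt e) \<le> measure (\<pi> n \<Otimes>\<^sub>M \<pi> n) (distortion_gt (\<epsilon> n))"
        using elim distortion_gt_in_sets_pair[OF \<pi>(2)]
        by (intro finite_measure.finite_measure_mono[OF prob_space.finite_measure[OF pairs(1)]]
            distortion_gt_antimono) auto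
      also have "\<dots> \<le> b n"
        using bound[of n] by (simp add: eur_cost_def)
      finally show ?case .
    qed
  qed (use prob_space_pair[OF P(1) P(1)] sets_pair_borel[OF P(2) P(2)] open_distortion_gt b in auto)
  have "measure (P \<Otimes>\<^sub>M P) (distortion_gt e0) \<le> c"
  proof (rule LIMSEQ_le_const2[OF measure_distortion_gt_right_continuous])
    show "\<exists>N. \<forall>n\<ge>N. measure (P \<Otimes>\<^sub>M P) (distortion_gt (e0 + inverse (real (Suc n)))) \<le> c"
      using above by simp
  qed (use prob_space.finite_measure[OF prob_space_pair[OF P(1) P(1)]] distortion_gt_in_sets_pair[OF P(2)]
      in auto)
  then show ?thesis
    unfolding eur_cost_def using \<open>e0 \<le> c\<close> by simp
qed

lemma exists_coupling_eur_cost_le_d_Eur: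
  fixes mX :: "'a::polish_space measure" and mY :: "'b::polish_space measure"
  assumes "mm_space mX" "mm_space mY"
  obtains \<pi> \<epsilon> where "\<pi> \<in> couplings mX mY" "0 \<le> \<epsilon>" "eur_cost \<pi> \<epsilon> \<le> d_Eur mX mY"
proof -
  let ?d = "d_Eur mX mY"
  have "\<forall>n. \<exists>\<pi>\<in>couplings mX mY. \<exists>\<epsilon>\<ge>0. eur_cost \<pi> \<epsilon> < ?d + inverse (real (Suc n))"
    using exists_coupling_eur_cost_less pair_measure_in_couplings[OF assms] by fastforce
  then obtain \<pi> \<epsilon> where \<pi>: "\<And>n. \<pi> n \<in> couplings mX mY" and \<epsilon>: "\<And>n. 0 \<le> \<epsilon> n"
    and cost: "\<And>n. eur_cost (\<pi> n) (\<epsilon> n) < ?d + inverse (real (Suc n))"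
    by metis
  note C = couplingsD[OF \<pi>]
  obtain r P where r: "strict_mono r" and P: "prob_space P" "sets P = sets borel"
    and lim: "open_set_weak_limit (\<pi> \<circ> r) P"
    using prokhorov_open_set_weak_limit[of \<pi>, OF C(1,2)] couplings_tight[OF assms] \<pi> by metis
  have "\<epsilon> n \<in> {0..?d + 1}" for n
    using \<epsilon>[of n] cost[of n] inverse_le_1_iff[of "real (Suc n)"] unfolding eur_cost_def by auto
  then have "bounded (range (\<epsilon> \<circ> r))"
    by (intro bounded_subset[OF bounded_closed_interval[of 0 "?d + 1"]]) auto
  then obtain s e0 where s: "strict_mono s" and e0: "(\<epsilon> \<circ> r \<circ> s) \<longlonglongrightarrow> e0"
    using bounded_imp_convergent_subsequence by blast
  have "distr P mX fst = mX" "distr P mY snd = mY"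
    using C(2-4) lim
    by (auto intro!: distr_eq_of_open_set_weak_limit[OF P mm_spaceD[OF assms(1)], of "\<pi> \<circ> r"]
        distr_eq_of_open_set_weak_limit[OF P mm_spaceD[OF assms(2)], of "\<pi> \<circ> r"] continuous_intros)
  then have "P \<in> couplings mX mY"
    using P unfolding couplings_def by auto
  moreover have "eur_cost P e0 \<le> ?d"
  proof (rule eur_cost_le_of_open_set_weak_limit)
    show "open_set_weak_limit (\<pi> \<circ> r \<circ> s) P"
      using lim s by (rule open_set_weak_limit_subseq)
    show "eur_cost ((\<pi> \<circ> r \<circ> s) n) ((\<epsilon> \<circ> r \<circ> s) n) \<le> ((\<lambda>n. ?d + inverse (real (Suc n))) \<circ> r \<circ> s) n" for n
      using less_imp_le[OF cost] by simp
    have "(\<lambda>n. ?d + inverse (real (Suc n))) \<longlonglongrightarrow> ?d"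
      using tendsto_add[OF tendsto_const LIMSEQ_inverse_real_of_nat, of ?d] by simp
    then show "((\<lambda>n. ?d + inverse (real (Suc n))) \<circ> r \<circ> s) \<longlonglongrightarrow> ?d"
      using r s by (intro LIMSEQ_subseq_LIMSEQ strict_mono_o)
  qed (use C P e0 in \<open>auto simp: o_def\<close>)
  moreover have "0 \<le> e0"
    using \<epsilon> by (intro LIMSEQ_le_const[OF e0]) auto
  ultimately show ?thesis
    using that by blast
qed

theorem theorem6p3:
  fixes mX :: "'a::polish_space measure" and mY :: "'b::polish_space measure"
  assumes "mm_space mX" and "mm_space mY"
  shows "(\<forall>\<pi> \<in> couplings mX mY. \<exists>\<epsilon>\<ge>0. \<forall>\<epsilon>'\<ge>0. eur_cost \<pi> \<epsilon> \<le> eur_cost \<pi> \<epsilon>')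
    \<and> (\<exists>\<pi> \<in> couplings mX mY. \<exists>\<epsilon>\<ge>0.
         eur_cost \<pi> \<epsilon> = d_Eur mX mY
       \<and> (\<forall>\<pi>' \<in> couplings mX mY. \<forall>\<epsilon>'\<ge>0. eur_cost \<pi> \<epsilon> \<le> eur_cost \<pi>' \<epsilon>'))"
proof -
  obtain \<pi> \<epsilon> where \<pi>: "\<pi> \<in> couplings mX mY" "0 \<le> \<epsilon>" "eur_cost \<pi> \<epsilon> \<le> d_Eur mX mY"
    using exists_coupling_eur_cost_le_d_Eur[OF assms] .
  have "eur_cost \<pi> \<epsilon> = d_Eur mX mY"
    using \<pi> d_Eur_le_eur_cost by (blast intro: antisym)
  moreover have "\<forall>\<pi>' \<in> couplings mX mY. \<forall>\<epsilon>'\<ge>0. eur_cost \<pi> \<epsilon> \<le> eur_cost \<pi>' \<epsilon>'"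
    using \<pi>(3) d_Eur_le_eur_cost by (blast intro: order_trans)
  moreover have "\<forall>\<pi> \<in> couplings mX mY. \<exists>\<epsilon>\<ge>0. \<forall>\<epsilon>'\<ge>0. eur_cost \<pi> \<epsilon> \<le> eur_cost \<pi> \<epsilon>'"
    using eur_cost_attains_min[OF couplingsD(1,2)] by blast
  ultimately show ?thesis
    using \<pi>(1,2) by blast
qed

end
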